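(* The variety $\mathcal{WHB}$ of WHB-algebras, and hence each of its subvarieties, has the congruence extension property: whenever $\mathbf A$ is a subalgebra of a WHB-algebra $\mathbf B$ (in the variety in question) and $\delta$ is a congruence of $\mathbf A$, there is a congruence $\theta$ of $\mathbf B$ with $\delta=\theta\cap A^2$.
   Context: A WHB-algebra is an algebra $(A,\wedge,\vee,\to,\leftarrow,0,1)$ such that $(A,\wedge,\vee,0,1)$ is a bounded distributive lattice and for all $a,b,c\in A$: $a\to a=1$; $a\to(b\wedge c)=(a\to b)\wedge(a\to c)$; $(a\vee b)\to c=(a\to c)\wedge(b\to c)$; $(a\to b)\wedge(b\to c)\le a\to c$; $a\leftarrow a=0$; $(a\vee b)\leftarrow c=(a\leftarrow c)\vee(b\leftarrow c)$; $a\leftarrow(b\wedge c)=(a\leftarrow b)\vee(a\leftarrow c)$; $a\leftarrow c\le(a\leftarrow b)\vee(b\leftarrow c)$; $a\wedge((a\to b)\leftarrow 0)\le b$; $a\le b\vee(1\to(a\leftarrow b))$. *)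

theory Defs
  imports Main
begin

record 'a whb_alg =
  carrier :: "'a set"
  mt :: "'a \<Rightarrow> 'a \<Rightarrow> 'a"
  jn :: "'a \<Rightarrow> 'a \<Rightarrow> 'a"
  imp :: "'a \<Rightarrow> 'a \<Rightarrow> 'a"
  coimp :: "'a \<Rightarrow> 'a \<Rightarrow> 'a"
  bot :: "'a"
  top :: "'a"

definition whb_le :: "('a, 'b) whb_alg_scheme \<Rightarrow> 'a \<Rightarrow> 'a \<Rightarrow> bool" where
  "whb_le B a b \<longleftrightarrow> mt B a b = a"

definition WHB_algebra :: "('a, 'b) whb_alg_scheme \<Rightarrow> bool" where
  "WHB_algebra B \<longleftrightarrow>
    (let A = carrier B; m = mt B; j = jn B; i = imp B; c = coimp B; z = bot B; u = top B;
         le = whb_le B in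
     \<comment> \<open>closure\<close>
     z \<in> A \<and> u \<in> A \<and>
     (\<forall>a\<in>A. \<forall>b\<in>A. m a b \<in> A \<and> j a b \<in> A \<and> i a b \<in> A \<and> c a b \<in> A) \<and>
     \<comment> \<open>bounded distributive lattice\<close>
     (\<forall>a\<in>A. \<forall>b\<in>A. \<forall>d\<in>A.
        m (m a b) d = m a (m b d) \<and> j (j a b) d = j a (j b d) \<and>
        m a b = m b a \<and> j a b = j b a \<and>
        m a (j a b) = a \<and> j a (m a b) = a \<and>
        m a (j b d) = j (m a b) (m a d)) \<and>
     (\<forall>a\<in>A. m a z = z \<and> j a u = u) \<and>
     \<comment> \<open>WHB axioms\<close>
     (\<forall>a\<in>A. \<forall>b\<in>A. \<forall>d\<in>A.
        i a a = u \<and>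
        i a (m b d) = m (i a b) (i a d) \<and>
        i (j a b) d = m (i a d) (i b d) \<and>
        le (m (i a b) (i b d)) (i a d) \<and>
        c a a = z \<and>
        c (j a b) d = j (c a d) (c b d) \<and>
        c a (m b d) = j (c a b) (c a d) \<and>
        le (c a d) (j (c a b) (c b d)) \<and>
        le (m a (c (i a b) z)) b \<and>
        le a (j b (i u (c a b)))))"

definition subuniverse :: "'a set \<Rightarrow> ('a, 'b) whb_alg_scheme \<Rightarrow> bool" where
  "subuniverse A B \<longleftrightarrow> A \<subseteq> carrier B \<and> bot B \<in> A \<and> top B \<in> A \<and>
     (\<forall>a\<in>A. \<forall>b\<in>A. mt B a b \<in> A \<and> jn B a b \<in> A \<and> imp B a b \<in> A \<and> coimp B a b \<in> A)"

definition congruence_on :: "'a set \<Rightarrow> ('a, 'b) whb_alg_scheme \<Rightarrow> ('a \<times> 'a) set \<Rightarrow> bool" where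
  "congruence_on A B \<delta> \<longleftrightarrow> equiv A \<delta> \<and>
     (\<forall>a b a' b'. (a, a') \<in> \<delta> \<longrightarrow> (b, b') \<in> \<delta> \<longrightarrow>
        (mt B a b, mt B a' b') \<in> \<delta> \<and> (jn B a b, jn B a' b') \<in> \<delta> \<and>
        (imp B a b, imp B a' b') \<in> \<delta> \<and> (coimp B a b, coimp B a' b') \<in> \<delta>)"

end

theory Submission
  imports Defs
begin

text \<open>
  A set Y of prime filters of B determines an equivalence on B: identify elements
  lying in exactly the same members of Y. Take for Y the prime filters that are
  saturated for \<delta>. Since they are prime, the equivalence respects meet and join.
  It respects the implication and the co-implication because Y is closed under the
  two accessibility relations of the dual space of prime filters, and the prime
  filter theorem, applied to the preorders a \<rightarrow> b \<in> P and a \<leftarrow> b \<notin> P, provides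
  successors witnessing every failure. Finally it cuts out exactly \<delta> on A: if
  a \<and> a' is not \<delta>-related to a, the prime filter theorem for the lattice A/\<delta> separates
  a from a' by a saturated prime filter of A, and every prime filter of the sublattice
  A is the trace of a prime filter of B.
\<close>

definition saturated :: "('a \<times> 'a) set \<Rightarrow> 'a set \<Rightarrow> bool" where
  "saturated \<theta> P \<longleftrightarrow> (\<forall>(a, b) \<in> \<theta>. a \<in> P \<longrightarrow> b \<in> P)"

lemma saturatedD: "saturated \<theta> P \<Longrightarrow> (a, b) \<in> \<theta> \<Longrightarrow> a \<in> P \<Longrightarrow> b \<in> P"
  unfolding saturated_def by blast

locale bdlat =
  fixes C :: "'a set" and m j :: "'a \<Rightarrow> 'a \<Rightarrow> 'a" and z u :: 'a
  assumes z_in: "z \<in> C" and u_in: "u \<in> C"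
    and m_in: "a \<in> C \<Longrightarrow> b \<in> C \<Longrightarrow> m a b \<in> C"
    and j_in: "a \<in> C \<Longrightarrow> b \<in> C \<Longrightarrow> j a b \<in> C"
    and m_assoc: "a \<in> C \<Longrightarrow> b \<in> C \<Longrightarrow> d \<in> C \<Longrightarrow> m (m a b) d = m a (m b d)"
    and j_assoc: "a \<in> C \<Longrightarrow> b \<in> C \<Longrightarrow> d \<in> C \<Longrightarrow> j (j a b) d = j a (j b d)"
    and m_comm: "a \<in> C \<Longrightarrow> b \<in> C \<Longrightarrow> m a b = m b a"
    and j_comm: "a \<in> C \<Longrightarrow> b \<in> C \<Longrightarrow> j a b = j b a"
    and m_absorb: "a \<in> C \<Longrightarrow> b \<in> C \<Longrightarrow> m a (j a b) = a"
    and j_absorb: "a \<in> C \<Longrightarrow> b \<in> C \<Longrightarrow> j a (m a b) = a"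
    and distrib: "a \<in> C \<Longrightarrow> b \<in> C \<Longrightarrow> d \<in> C \<Longrightarrow> m a (j b d) = j (m a b) (m a d)"
    and m_bot: "a \<in> C \<Longrightarrow> m a z = z"
    and j_top: "a \<in> C \<Longrightarrow> j a u = u"
begin

definition le :: "'a \<Rightarrow> 'a \<Rightarrow> bool" where
  "le a b \<longleftrightarrow> m a b = a"

lemma meet_idem: "a \<in> C \<Longrightarrow> m a a = a"
  using m_absorb[of a "m a a"] j_absorb[of a a] m_in by simp

lemma le_refl: "a \<in> C \<Longrightarrow> le a a"
  by (simp add: le_def meet_idem)

lemma le_trans: "a \<in> C \<Longrightarrow> b \<in> C \<Longrightarrow> d \<in> C \<Longrightarrow> le a b \<Longrightarrow> le b d \<Longrightarrow> le a d"
  unfolding le_def using m_assoc[of a b d] by simp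

lemma le_iff_join: "a \<in> C \<Longrightarrow> b \<in> C \<Longrightarrow> le a b \<longleftrightarrow> j a b = b"
  unfolding le_def using m_absorb[of a b] j_absorb[of b a] j_comm[of a b] m_comm[of a b] by auto

lemma meet_le1: "a \<in> C \<Longrightarrow> b \<in> C \<Longrightarrow> le (m a b) a"
  unfolding le_def using m_comm[of "m a b" a] m_assoc[of a a b] meet_idem[of a] m_in by simp

lemma meet_le2: "a \<in> C \<Longrightarrow> b \<in> C \<Longrightarrow> le (m a b) b"
  unfolding le_def using m_assoc[of a b b] meet_idem[of b] by simp

lemma join_ge1: "a \<in> C \<Longrightarrow> b \<in> C \<Longrightarrow> le a (j a b)"
  unfolding le_def by (rule m_absorb)

lemma join_ge2: "a \<in> C \<Longrightarrow> b \<in> C \<Longrightarrow> le b (j a b)"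
  unfolding le_def using m_absorb[of b a] j_comm[of a b] by simp

lemma le_meetI: "a \<in> C \<Longrightarrow> b \<in> C \<Longrightarrow> d \<in> C \<Longrightarrow> le d a \<Longrightarrow> le d b \<Longrightarrow> le d (m a b)"
  unfolding le_def using m_assoc[of d a b] by simp

lemma le_joinI: "a \<in> C \<Longrightarrow> b \<in> C \<Longrightarrow> d \<in> C \<Longrightarrow> le a d \<Longrightarrow> le b d \<Longrightarrow> le (j a b) d"
  using j_assoc[of a b d] by (simp add: le_iff_join j_in)

lemma meet_top: "a \<in> C \<Longrightarrow> m a u = a"
  using m_absorb[of a u] j_top[of a] u_in by simp

lemma top_meet: "a \<in> C \<Longrightarrow> m u a = a"
  using m_comm[of u a] meet_top u_in by simp

lemma join_bot: "a \<in> C \<Longrightarrow> j a z = a"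
  using j_absorb[of a z] m_bot[of a] z_in by simp

lemma bot_join: "a \<in> C \<Longrightarrow> j z a = a"
  using j_comm[of z a] join_bot z_in by simp

lemma bot_le: "a \<in> C \<Longrightarrow> le z a"
  by (simp add: le_iff_join bot_join z_in)

lemma le_top: "a \<in> C \<Longrightarrow> le a u"
  by (simp add: le_def meet_top)

lemma distrib_right: "a \<in> C \<Longrightarrow> b \<in> C \<Longrightarrow> d \<in> C \<Longrightarrow> m (j b d) a = j (m b a) (m d a)"
  using distrib[of a b d] m_comm[of a] j_in by simp

lemma join_meet_distrib: "a \<in> C \<Longrightarrow> b \<in> C \<Longrightarrow> d \<in> C \<Longrightarrow> j a (m b d) = m (j a b) (j a d)"
proof -
  assume abd: "a \<in> C" "b \<in> C" "d \<in> C"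
  have "m (j a b) (j a d) = j (m (j a b) a) (m (j a b) d)"
    using abd by (simp add: distrib j_in)
  also have "\<dots> = j a (j (m a d) (m b d))"
    using abd m_comm[of "j a b" a] m_absorb[of a b] distrib_right[of d a b] j_in by simp
  also have "\<dots> = j (j a (m a d)) (m b d)"
    using abd by (simp add: j_assoc m_in)
  also have "\<dots> = j a (m b d)"
    using abd by (simp add: j_absorb)
  finally show ?thesis ..
qed

lemma meet_meet_distrib: "a \<in> C \<Longrightarrow> b \<in> C \<Longrightarrow> d \<in> C \<Longrightarrow> m a (m b d) = m (m a b) (m a d)"
proof -
  assume abd: "a \<in> C" "b \<in> C" "d \<in> C"
  have "m (m a b) (m a d) = m a (m (m b a) d)"
    using abd by (simp add: m_assoc m_in)
  also have "\<dots> = m (m a a) (m b d)"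
    using abd by (simp add: m_comm[of b a] m_assoc m_in)
  finally show ?thesis
    using abd by (simp add: meet_idem)
qed

lemma meet_mono: "a \<in> C \<Longrightarrow> b \<in> C \<Longrightarrow> a' \<in> C \<Longrightarrow> b' \<in> C \<Longrightarrow> le a a' \<Longrightarrow> le b b'
    \<Longrightarrow> le (m a b) (m a' b')"
  using le_trans[of "m a b" a a'] le_trans[of "m a b" b b'] by (simp add: le_meetI meet_le1 meet_le2 m_in)

lemma join_mono: "a \<in> C \<Longrightarrow> b \<in> C \<Longrightarrow> a' \<in> C \<Longrightarrow> b' \<in> C \<Longrightarrow> le a a' \<Longrightarrow> le b b'
    \<Longrightarrow> le (j a b) (j a' b')"
  using le_trans[of a a' "j a' b'"] le_trans[of b b' "j a' b'"] by (simp add: le_joinI join_ge1 join_ge2 j_in)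

lemma meet_join_weaken:
  assumes "a \<in> C" "b \<in> C" "q \<in> C" "q' \<in> C" "r \<in> C" "r' \<in> C"
    and "le (m q a) (j b r)" "le q' q" "le r r'"
  shows "le (m q' a) (j b r')"
proof -
  have "le (m q' a) (m q a)"
    using assms by (simp add: meet_mono le_refl)
  moreover have "le (j b r) (j b r')"
    using assms by (simp add: join_mono le_refl)
  ultimately show ?thesis
    using assms le_trans[of "m q' a" "m q a" "j b r"] le_trans[of "m q' a" "j b r" "j b r'"]
    by (simp add: m_in j_in)
qed

definition sublattice :: "'a set \<Rightarrow> bool" where
  "sublattice S \<longleftrightarrow> S \<subseteq> C \<and> z \<in> S \<and> u \<in> S \<and> (\<forall>a\<in>S. \<forall>b\<in>S. m a b \<in> S \<and> j a b \<in> S)"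

lemma sublattice_bdlat: "sublattice S \<Longrightarrow> bdlat S m j z u"
  unfolding sublattice_def
  by unfold_locales (auto intro: m_assoc j_assoc m_comm j_comm m_absorb j_absorb distrib m_bot j_top)

definition prime_filter :: "'a set \<Rightarrow> bool" where
  "prime_filter P \<longleftrightarrow> P \<subseteq> C \<and> u \<in> P \<and> z \<notin> P \<and> (\<forall>a\<in>P. \<forall>b\<in>C. le a b \<longrightarrow> b \<in> P)
     \<and> (\<forall>a\<in>P. \<forall>b\<in>P. m a b \<in> P) \<and> (\<forall>a\<in>C. \<forall>b\<in>C. j a b \<in> P \<longrightarrow> a \<in> P \<or> b \<in> P)"

lemma prime_filter_top: "prime_filter P \<Longrightarrow> u \<in> P"
  by (simp add: prime_filter_def)

lemma prime_filter_bot: "prime_filter P \<Longrightarrow> z \<notin> P"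
  by (simp add: prime_filter_def)

lemma prime_filter_up: "prime_filter P \<Longrightarrow> a \<in> P \<Longrightarrow> b \<in> C \<Longrightarrow> le a b \<Longrightarrow> b \<in> P"
  unfolding prime_filter_def by blast

lemma prime_filter_meet_iff:
  assumes "prime_filter P" "a \<in> C" "b \<in> C"
  shows "m a b \<in> P \<longleftrightarrow> a \<in> P \<and> b \<in> P"
proof -
  have "m a b \<in> P \<Longrightarrow> a \<in> P" "m a b \<in> P \<Longrightarrow> b \<in> P"
    using prime_filter_up[OF assms(1)] assms(2,3) by (simp_all add: meet_le1 meet_le2)
  moreover have "a \<in> P \<Longrightarrow> b \<in> P \<Longrightarrow> m a b \<in> P"
    using assms(1) unfolding prime_filter_def by blast
  ultimately show ?thesis
    by blast
qed

lemma prime_filter_join_iff: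
  assumes "prime_filter P" "a \<in> C" "b \<in> C"
  shows "j a b \<in> P \<longleftrightarrow> a \<in> P \<or> b \<in> P"
proof -
  have "a \<in> P \<Longrightarrow> j a b \<in> P" "b \<in> P \<Longrightarrow> j a b \<in> P"
    using prime_filter_up[OF assms(1)] assms(2,3) by (simp_all add: join_ge1 join_ge2 j_in)
  moreover have "j a b \<in> P \<Longrightarrow> a \<in> P \<or> b \<in> P"
    using assms unfolding prime_filter_def by blast
  ultimately show ?thesis
    by blast
qed

definition lattice_congruence :: "'a set \<Rightarrow> ('a \<times> 'a) set \<Rightarrow> bool" where
  "lattice_congruence S \<theta> \<longleftrightarrow> equiv S \<theta> \<and>
     (\<forall>a b a' b'. (a, a') \<in> \<theta> \<longrightarrow> (b, b') \<in> \<theta> \<longrightarrow> (m a b, m a' b') \<in> \<theta> \<and> (j a b, j a' b') \<in> \<theta>)"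

end

text \<open>
  The prime filter theorem is proved once for such preorders and used for four of
  them: the order of a quotient lattice, a \<rightarrow> b \<in> P, a \<leftarrow> b \<notin> P, and the order
  modulo a filter and an ideal.
\<close>

locale lattice_preorder = bdlat +
  fixes R :: "'a \<Rightarrow> 'a \<Rightarrow> bool"
  assumes le_imp_R: "a \<in> C \<Longrightarrow> b \<in> C \<Longrightarrow> le a b \<Longrightarrow> R a b"
    and R_trans: "a \<in> C \<Longrightarrow> b \<in> C \<Longrightarrow> d \<in> C \<Longrightarrow> R a b \<Longrightarrow> R b d \<Longrightarrow> R a d"
    and R_meetI: "a \<in> C \<Longrightarrow> b \<in> C \<Longrightarrow> d \<in> C \<Longrightarrow> R a b \<Longrightarrow> R a d \<Longrightarrow> R a (m b d)"
    and R_joinI: "a \<in> C \<Longrightarrow> b \<in> C \<Longrightarrow> d \<in> C \<Longrightarrow> R a d \<Longrightarrow> R b d \<Longrightarrow> R (j a b) d"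
begin

definition R_closed :: "'a set \<Rightarrow> bool" where
  "R_closed G \<longleftrightarrow> (\<forall>a\<in>G. \<forall>b\<in>C. R a b \<longrightarrow> b \<in> G)"

definition R_filter :: "'a set \<Rightarrow> bool" where
  "R_filter G \<longleftrightarrow> G \<subseteq> C \<and> R_closed G \<and> (\<forall>a\<in>G. \<forall>b\<in>G. m a b \<in> G)"

lemma R_le_trans: "a \<in> C \<Longrightarrow> a' \<in> C \<Longrightarrow> b \<in> C \<Longrightarrow> le a' a \<Longrightarrow> R a b \<Longrightarrow> R a' b"
  using R_trans[of a' a b] le_imp_R[of a' a] by simp

lemma R_filter_Union:
  assumes "subset.chain {G. R_filter G} K"
  shows "R_filter (\<Union>K)"
proof -
  have filters: "R_filter G" if "G \<in> K" for G
    using assms that by (auto simp: subset_chain_def)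
  have "m a b \<in> \<Union>K" if ab: "a \<in> \<Union>K" "b \<in> \<Union>K" for a b
  proof -
    obtain G1 G2 where "G1 \<in> K" "G2 \<in> K" "a \<in> G1" "b \<in> G2"
      using ab by blast
    moreover have "G1 \<subseteq> G2 \<or> G2 \<subseteq> G1"
      using assms \<open>G1 \<in> K\<close> \<open>G2 \<in> K\<close> by (auto simp: subset_chain_def)
    ultimately show ?thesis
      using filters unfolding R_filter_def by blast
  qed
  then show ?thesis
    using filters unfolding R_filter_def R_closed_def by blast
qed

definition R_adjoin :: "'a set \<Rightarrow> 'a \<Rightarrow> 'a set" where
  "R_adjoin G c = {e \<in> C. \<exists>g\<in>G. R (m g c) e}"

lemma R_filter_adjoin:
  assumes G: "R_filter G" and c: "c \<in> C"
  shows "R_filter (R_adjoin G c)"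
proof -
  have GC: "G \<subseteq> C"
    using G by (simp add: R_filter_def)
  have "m a b \<in> R_adjoin G c" if ab: "a \<in> R_adjoin G c" "b \<in> R_adjoin G c" for a b
  proof -
    obtain g1 g2 where g: "g1 \<in> G" "g2 \<in> G" "R (m g1 c) a" "R (m g2 c) b" "a \<in> C" "b \<in> C"
      using ab by (auto simp: R_adjoin_def)
    have gC: "g1 \<in> C" "g2 \<in> C" "m g1 g2 \<in> C"
      using g GC by (auto intro: m_in)
    have "le (m (m g1 g2) c) (m g1 c)" "le (m (m g1 g2) c) (m g2 c)"
      using gC c by (simp_all add: meet_mono meet_le1 meet_le2 le_refl)
    then have "R (m (m g1 g2) c) a" "R (m (m g1 g2) c) b"
      using R_le_trans[OF m_in m_in] gC c g by simp_all
    then have "R (m (m g1 g2) c) (m a b)"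
      using R_meetI gC(3) c g(5,6) m_in by simp
    moreover have "m g1 g2 \<in> G"
      using G g by (simp add: R_filter_def)
    ultimately show ?thesis
      using g m_in by (auto simp: R_adjoin_def)
  qed
  moreover have "e \<in> R_adjoin G c" if "a \<in> R_adjoin G c" "e \<in> C" "R a e" for a e
  proof -
    obtain g where "g \<in> G" "a \<in> C" "R (m g c) a"
      using \<open>a \<in> R_adjoin G c\<close> by (auto simp: R_adjoin_def)
    then have "R (m g c) e"
      using R_trans[OF m_in[OF _ c]] GC \<open>e \<in> C\<close> \<open>R a e\<close> by blast
    then show ?thesis
      using \<open>g \<in> G\<close> \<open>e \<in> C\<close> by (auto simp: R_adjoin_def)
  qed
  ultimately show ?thesis
    unfolding R_filter_def R_closed_def by (auto simp: R_adjoin_def)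
qed

lemma R_adjoin_subset:
  assumes "R_filter G" and c: "c \<in> C"
  shows "G \<subseteq> R_adjoin G c"
proof
  fix g assume "g \<in> G"
  moreover have "g \<in> C"
    using assms(1) \<open>g \<in> G\<close> by (auto simp: R_filter_def)
  moreover have "R (m g c) g"
    using \<open>g \<in> C\<close> c by (simp add: le_imp_R meet_le1 m_in)
  ultimately show "g \<in> R_adjoin G c"
    by (auto simp: R_adjoin_def)
qed

lemma R_adjoin_mem:
  assumes "R_filter G" and "g \<in> G" and c: "c \<in> C"
  shows "c \<in> R_adjoin G c"
proof -
  have "g \<in> C"
    using assms(1,2) by (auto simp: R_filter_def)
  then have "R (m g c) c"
    using c by (simp add: le_imp_R meet_le2 m_in)
  then show ?thesis
    using assms(2) c by (auto simp: R_adjoin_def)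
qed

lemma maximal_R_filter_prime:
  assumes M: "R_filter M" "x \<in> M" "y \<in> C" "y \<notin> M"
    and M_max: "\<And>G. R_filter G \<Longrightarrow> x \<in> G \<Longrightarrow> y \<notin> G \<Longrightarrow> M \<subseteq> G \<Longrightarrow> G = M"
  shows "prime_filter M"
proof -
  have MC: "M \<subseteq> C" and M_closed: "\<And>a b. a \<in> M \<Longrightarrow> b \<in> C \<Longrightarrow> R a b \<Longrightarrow> b \<in> M"
    and M_meet: "\<And>a b. a \<in> M \<Longrightarrow> b \<in> M \<Longrightarrow> m a b \<in> M"
    using M(1) by (auto simp: R_filter_def R_closed_def)
  have M_up: "b \<in> M" if "a \<in> M" "b \<in> C" "le a b" for a b
    using M_closed[OF that(1,2) le_imp_R[OF _ that(2,3)]] MC that(1) by blast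
  have escape: "\<exists>g\<in>M. R (m g c) y" if c: "c \<in> C" "c \<notin> M" for c
  proof (rule ccontr)
    assume "\<not> ?thesis"
    then have "y \<notin> R_adjoin M c"
      by (auto simp: R_adjoin_def)
    then have "R_adjoin M c = M"
      using M_max R_filter_adjoin[OF M(1) c(1)] R_adjoin_subset[OF M(1) c(1)] M(2) by blast
    then show False
      using R_adjoin_mem[OF M(1,2) c(1)] c(2) by blast
  qed
  have "a \<in> M \<or> b \<in> M" if ab: "a \<in> C" "b \<in> C" "j a b \<in> M" for a b
  proof (rule ccontr)
    assume "\<not> ?thesis"
    then obtain g1 g2 where g: "g1 \<in> M" "g2 \<in> M" "R (m g1 a) y" "R (m g2 b) y"
      using escape ab by blast
    define h where "h = m g1 g2"
    have hM: "h \<in> M" and gC: "g1 \<in> C" "g2 \<in> C" and hC: "h \<in> C"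
      using g MC M_meet by (auto simp: h_def)
    have "le (m h a) (m g1 a)" "le (m h b) (m g2 b)"
      using gC ab by (simp_all add: h_def meet_mono meet_le1 meet_le2 le_refl m_in)
    then have "R (m h a) y" "R (m h b) y"
      using R_le_trans[OF m_in m_in] g gC hC ab M(3) by simp_all
    then have "R (m h (j a b)) y"
      using R_joinI hC ab M(3) m_in by (simp add: distrib)
    then show False
      using M_closed[OF M_meet[OF hM ab(3)] M(3)] M(4) by blast
  qed
  moreover have "u \<in> M"
    using M_up[OF M(2) u_in le_top] MC M(2) by blast
  moreover have "z \<notin> M"
    using M_up[OF _ M(3) bot_le[OF M(3)]] M(4) by blast
  ultimately show "prime_filter M"
    using MC M_up M_meet unfolding prime_filter_def by blast
qed

theorem prime_filter_separation:
  assumes x: "x \<in> C" and y: "y \<in> C" and "\<not> R x y"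
  obtains Q where "prime_filter Q" "R_closed Q" "x \<in> Q" "y \<notin> Q"
proof -
  let ?F = "{G. R_filter G \<and> x \<in> G \<and> y \<notin> G}"
  have "R x e" if "a \<in> C" "e \<in> C" "R x a" "R a e" for a e
    using R_trans[OF x] that by blast
  moreover have "R x (m a b)" if "a \<in> C" "b \<in> C" "R x a" "R x b" for a b
    using R_meetI[OF x] that by blast
  ultimately have "R_filter {b \<in> C. R x b}"
    unfolding R_filter_def R_closed_def by (auto intro: m_in)
  then have "{b \<in> C. R x b} \<in> ?F"
    using assms le_imp_R le_refl by auto
  moreover have "\<Union>K \<in> ?F" if "K \<noteq> {}" "subset.chain ?F K" for K
    using that R_filter_Union[of K] by (auto simp: subset_chain_def)
  ultimately have "\<exists>M\<in>?F. \<forall>G\<in>?F. M \<subseteq> G \<longrightarrow> G = M"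
    by (intro subset_Zorn_nonempty) blast+
  then obtain M where M: "R_filter M" "x \<in> M" "y \<notin> M"
    and M_max: "\<And>G. R_filter G \<Longrightarrow> x \<in> G \<Longrightarrow> y \<notin> G \<Longrightarrow> M \<subseteq> G \<Longrightarrow> G = M"
    by blast
  then have "prime_filter M"
    using y by (intro maximal_R_filter_prime)
  with M show ?thesis
    using that unfolding R_filter_def by blast
qed

end

locale filter_ideal = bdlat +
  fixes F I :: "'a set"
  assumes F_subset: "F \<subseteq> C" and top_in_F: "u \<in> F"
    and F_meet: "a \<in> F \<Longrightarrow> b \<in> F \<Longrightarrow> m a b \<in> F"
    and I_subset: "I \<subseteq> C" and bot_in_I: "z \<in> I"
    and I_join: "a \<in> I \<Longrightarrow> b \<in> I \<Longrightarrow> j a b \<in> I"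
begin

definition le_mod :: "'a \<Rightarrow> 'a \<Rightarrow> bool" where
  "le_mod a b \<longleftrightarrow> (\<exists>q\<in>F. \<exists>r\<in>I. le (m q a) (j b r))"

lemma le_modE:
  assumes "le_mod a b"
  obtains q r where "q \<in> F" "r \<in> I" "q \<in> C" "r \<in> C" "le (m q a) (j b r)"
  using assms F_subset I_subset unfolding le_mod_def by blast

lemma le_imp_le_mod: "a \<in> C \<Longrightarrow> b \<in> C \<Longrightarrow> le a b \<Longrightarrow> le_mod a b"
  unfolding le_mod_def using top_in_F bot_in_I by (force simp: top_meet join_bot)

lemma le_mod_trans:
  assumes abd: "a \<in> C" "b \<in> C" "d \<in> C" and "le_mod a b" "le_mod b d"
  shows "le_mod a d"
proof -
  obtain q r q' r' where qr: "q \<in> F" "r \<in> I" "q' \<in> F" "r' \<in> I" "q \<in> C" "r \<in> C" "q' \<in> C" "r' \<in> C"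
    and ab: "le (m q a) (j b r)" and bd: "le (m q' b) (j d r')"
    using assms(4,5) by (elim le_modE)
  have "le (m q' (m q a)) (m q' (j b r))"
    using ab abd qr by (simp add: meet_mono le_refl m_in j_in)
  moreover have "le (m q' (j b r)) (j (j d r') r)"
    using bd abd qr by (simp add: distrib join_mono meet_le2 m_in j_in)
  ultimately have "le (m q' (m q a)) (j (j d r') r)"
    using le_trans[of "m q' (m q a)" "m q' (j b r)" "j (j d r') r"] abd qr by (simp add: m_in j_in)
  then have "le (m (m q' q) a) (j d (j r' r))"
    using abd qr by (simp add: m_assoc j_assoc)
  then show ?thesis
    unfolding le_mod_def using qr F_meet I_join by blast
qed

lemma le_mod_meetI:
  assumes abd: "a \<in> C" "b \<in> C" "d \<in> C" and "le_mod a b" "le_mod a d"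
  shows "le_mod a (m b d)"
proof -
  obtain q r q' r' where qr: "q \<in> F" "r \<in> I" "q' \<in> F" "r' \<in> I" "q \<in> C" "r \<in> C" "q' \<in> C" "r' \<in> C"
    and ab: "le (m q a) (j b r)" and ad: "le (m q' a) (j d r')"
    using assms(4,5) by (elim le_modE)
  have "le (m (m q q') a) (j b (j r r'))" "le (m (m q q') a) (j d (j r r'))"
    using meet_join_weaken[OF _ _ _ _ _ _ ab] meet_join_weaken[OF _ _ _ _ _ _ ad] abd qr
    by (simp_all add: meet_le1 meet_le2 join_ge1 join_ge2 m_in j_in)
  then have "le (m (m q q') a) (m (j b (j r r')) (j d (j r r')))"
    using abd qr by (simp add: le_meetI m_in j_in)
  also have "m (j b (j r r')) (j d (j r r')) = j (m b d) (j r r')"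
    using abd qr join_meet_distrib[of "j r r'" b d] by (simp add: j_comm[of _ "j r r'"] j_in m_in)
  finally show ?thesis
    unfolding le_mod_def using qr F_meet I_join by blast
qed

lemma le_mod_joinI:
  assumes abd: "a \<in> C" "b \<in> C" "d \<in> C" and "le_mod a d" "le_mod b d"
  shows "le_mod (j a b) d"
proof -
  obtain q r q' r' where qr: "q \<in> F" "r \<in> I" "q' \<in> F" "r' \<in> I" "q \<in> C" "r \<in> C" "q' \<in> C" "r' \<in> C"
    and ad: "le (m q a) (j d r)" and bd: "le (m q' b) (j d r')"
    using assms(4,5) by (elim le_modE)
  have "le (m (m q q') a) (j d (j r r'))" "le (m (m q q') b) (j d (j r r'))"
    using meet_join_weaken[OF _ _ _ _ _ _ ad] meet_join_weaken[OF _ _ _ _ _ _ bd] abd qr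
    by (simp_all add: meet_le1 meet_le2 join_ge1 join_ge2 m_in j_in)
  then have "le (j (m (m q q') a) (m (m q q') b)) (j d (j r r'))"
    using abd qr by (simp add: le_joinI m_in j_in)
  then have "le (m (m q q') (j a b)) (j d (j r r'))"
    using abd qr by (simp add: distrib m_in)
  then show ?thesis
    unfolding le_mod_def using qr F_meet I_join by blast
qed

sublocale lattice_preorder C m j z u le_mod
proof (intro lattice_preorder.intro[OF bdlat_axioms] lattice_preorder_axioms.intro)
  show "le_mod a b" if "a \<in> C" "b \<in> C" "le a b" for a b
    using that by (rule le_imp_le_mod)
  show "le_mod a d" if "a \<in> C" "b \<in> C" "d \<in> C" "le_mod a b" "le_mod b d" for a b d
    using that by (rule le_mod_trans)
  show "le_mod a (m b d)" if "a \<in> C" "b \<in> C" "d \<in> C" "le_mod a b" "le_mod a d" for a b d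
    using that by (rule le_mod_meetI)
  show "le_mod (j a b) d" if "a \<in> C" "b \<in> C" "d \<in> C" "le_mod a d" "le_mod b d" for a b d
    using that by (rule le_mod_joinI)
qed

end

context bdlat
begin

lemma lattice_congruence_preorder:
  assumes "lattice_congruence C \<delta>"
  shows "lattice_preorder C m j z u (\<lambda>a b. (m a b, a) \<in> \<delta>)"
proof -
  have \<delta>: "equiv C \<delta>"
    and compat: "\<And>a b a' b'. (a, a') \<in> \<delta> \<Longrightarrow> (b, b') \<in> \<delta> \<Longrightarrow> (m a b, m a' b') \<in> \<delta> \<and> (j a b, j a' b') \<in> \<delta>"
    using assms by (simp_all add: lattice_congruence_def)
  have refl: "(a, a) \<in> \<delta>" if "a \<in> C" for a
    using \<delta> that unfolding equiv_def refl_on_def by blast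
  have trans: "(a, d) \<in> \<delta>" if "(a, b) \<in> \<delta>" "(b, d) \<in> \<delta>" for a b d
    using \<delta> that unfolding equiv_def trans_def by blast
  have sym: "(b, a) \<in> \<delta>" if "(a, b) \<in> \<delta>" for a b
    using \<delta> that unfolding equiv_def sym_def by blast
  show ?thesis
  proof unfold_locales
    fix a b
    assume "a \<in> C" "le a b"
    then show "(m a b, a) \<in> \<delta>"
      by (simp add: le_def refl)
  next
    fix a b d
    assume abd: "a \<in> C" "b \<in> C" "d \<in> C" and ab: "(m a b, a) \<in> \<delta>" and bd: "(m b d, b) \<in> \<delta>"
    have "(m a d, m (m a b) d) \<in> \<delta>"
      using compat[OF ab refl[OF abd(3)]] sym by blast
    moreover have "(m a (m b d), m a b) \<in> \<delta>"
      using compat[OF refl[OF abd(1)] bd] by blast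
    ultimately show "(m a d, a) \<in> \<delta>"
      using trans[OF trans ab] by (simp add: m_assoc abd)
  next
    fix a b d
    assume abd: "a \<in> C" "b \<in> C" "d \<in> C" and "(m a b, a) \<in> \<delta>" "(m a d, a) \<in> \<delta>"
    then have "(m (m a b) (m a d), m a a) \<in> \<delta>"
      using compat by blast
    then show "(m a (m b d), a) \<in> \<delta>"
      using abd by (simp add: meet_meet_distrib meet_idem)
  next
    fix a b d
    assume abd: "a \<in> C" "b \<in> C" "d \<in> C" and "(m a d, a) \<in> \<delta>" "(m b d, b) \<in> \<delta>"
    then have "(j (m a d) (m b d), j a b) \<in> \<delta>"
      using compat by blast
    then show "(m (j a b) d, j a b) \<in> \<delta>"
      using abd by (simp add: distrib_right)
  qed
qed

lemma prime_filter_complement_filter_ideal: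
  assumes S: "sublattice S" and Q: "bdlat.prime_filter S m j z u Q"
  shows "filter_ideal C m j z u Q (S - Q)"
proof -
  interpret S: bdlat S m j z u
    using S by (rule sublattice_bdlat)
  have SC: "S \<subseteq> C" and zS: "z \<in> S" and S_join: "\<And>a b. a \<in> S \<Longrightarrow> b \<in> S \<Longrightarrow> j a b \<in> S"
    using S by (auto simp: sublattice_def)
  have "Q \<subseteq> S" "u \<in> Q" "z \<notin> Q" "\<And>a b. a \<in> Q \<Longrightarrow> b \<in> Q \<Longrightarrow> m a b \<in> Q"
    and Q_prime: "\<And>a b. a \<in> S \<Longrightarrow> b \<in> S \<Longrightarrow> j a b \<in> Q \<Longrightarrow> a \<in> Q \<or> b \<in> Q"
    using Q unfolding S.prime_filter_def by auto
  moreover have "j a b \<in> S - Q" if "a \<in> S - Q" "b \<in> S - Q" for a b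
    using that S_join Q_prime by blast
  ultimately show ?thesis
    using SC zS by (intro filter_ideal.intro[OF bdlat_axioms] filter_ideal_axioms.intro) auto
qed

lemma prime_filter_extension:
  assumes S: "sublattice S" and Q: "bdlat.prime_filter S m j z u Q"
  obtains P where "prime_filter P" "P \<inter> S = Q"
proof -
  interpret S: bdlat S m j z u
    using S by (rule sublattice_bdlat)
  interpret R: filter_ideal C m j z u Q "S - Q"
    using S Q by (rule prime_filter_complement_filter_ideal)
  have SC: "S \<subseteq> C" and zS: "z \<in> S"
    using S by (auto simp: sublattice_def)
  have QS: "Q \<subseteq> S" and uQ: "u \<in> Q" and zQ: "z \<notin> Q"
    and Q_up: "\<And>a b. a \<in> Q \<Longrightarrow> b \<in> S \<Longrightarrow> le a b \<Longrightarrow> b \<in> Q"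
    using Q unfolding S.prime_filter_def by auto
  have "\<not> le q r" if "q \<in> Q" "r \<in> S - Q" for q r
    using that Q_up by blast
  then have "\<not> R.le_mod u z"
    using QS SC by (auto simp: R.le_mod_def meet_top bot_join subset_iff)
  then obtain P where P: "prime_filter P" "R.R_closed P" "u \<in> P" "z \<notin> P"
    using R.prime_filter_separation[OF u_in z_in] by blast
  have "q \<in> P" if "q \<in> Q" for q
  proof -
    have "q \<in> C"
      using that QS SC by blast
    then have "le (m q u) (j q z)"
      by (simp add: meet_top join_bot le_refl)
    then show ?thesis
      using P(2,3) that zS zQ \<open>q \<in> C\<close> unfolding R.R_closed_def R.le_mod_def by blast
  qed
  moreover have "r \<notin> P" if "r \<in> S - Q" for r
  proof
    assume "r \<in> P"
    have "r \<in> C"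
      using that SC by blast
    then have "le (m u r) (j z r)"
      by (simp add: top_meet bot_join le_refl)
    then show False
      using P(2,4) that uQ \<open>r \<in> P\<close> z_in unfolding R.R_closed_def R.le_mod_def by blast
  qed
  ultimately have "P \<inter> S = Q"
    using QS by blast
  with P(1) show thesis
    by (rule that)
qed

lemma saturated_prime_filter_separation:
  assumes S: "sublattice S" and \<delta>: "lattice_congruence S \<delta>"
    and x: "x \<in> S" and y: "y \<in> S" and "(m x y, x) \<notin> \<delta>"
  obtains P where "prime_filter P" "saturated \<delta> P" "x \<in> P" "y \<notin> P"
proof -
  interpret S: bdlat S m j z u
    using S by (rule sublattice_bdlat)
  interpret R: lattice_preorder S m j z u "\<lambda>a b. (m a b, a) \<in> \<delta>"
    using S.lattice_congruence_preorder \<delta> by simp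
  obtain Q where Q: "S.prime_filter Q" "R.R_closed Q" "x \<in> Q" "y \<notin> Q"
    using R.prime_filter_separation[OF x y] assms(5) by blast
  have \<delta>S: "\<delta> \<subseteq> S \<times> S"
    using \<delta> by (simp add: lattice_congruence_def equiv_type)
  have "saturated \<delta> Q"
    unfolding saturated_def
  proof clarify
    fix a b
    assume ab: "(a, b) \<in> \<delta>" and "a \<in> Q"
    have "a \<in> S" "b \<in> S"
      using ab \<delta>S by auto
    have "(a, a) \<in> \<delta>" "(b, a) \<in> \<delta>"
      using \<delta> ab \<open>a \<in> S\<close> unfolding lattice_congruence_def equiv_def refl_on_def sym_def by blast+
    then have "(m a b, m a a) \<in> \<delta>"
      using \<delta> unfolding lattice_congruence_def by blast
    then have "(m a b, a) \<in> \<delta>"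
      using \<open>a \<in> S\<close> by (simp add: S.meet_idem)
    then show "b \<in> Q"
      using Q(2) \<open>a \<in> Q\<close> \<open>b \<in> S\<close> unfolding R.R_closed_def by blast
  qed
  obtain P where P: "prime_filter P" "P \<inter> S = Q"
    using prime_filter_extension[OF S Q(1)] by blast
  have "saturated \<delta> P"
    using \<open>saturated \<delta> Q\<close> \<delta>S P(2) unfolding saturated_def by blast
  with P Q(3,4) x y show thesis
    using that by blast
qed

definition filter_kernel :: "'a set set \<Rightarrow> ('a \<times> 'a) set" where
  "filter_kernel Y = {(x, y). x \<in> C \<and> y \<in> C \<and> (\<forall>P\<in>Y. x \<in> P \<longleftrightarrow> y \<in> P)}"

lemma equiv_filter_kernel: "equiv C (filter_kernel Y)"
  unfolding equiv_def refl_on_def sym_def trans_def filter_kernel_def by auto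

lemma lattice_congruence_filter_kernel:
  assumes "\<And>P. P \<in> Y \<Longrightarrow> prime_filter P"
  shows "lattice_congruence C (filter_kernel Y)"
proof -
  have "(m a b, m a' b') \<in> filter_kernel Y \<and> (j a b, j a' b') \<in> filter_kernel Y"
    if "(a, a') \<in> filter_kernel Y" "(b, b') \<in> filter_kernel Y" for a b a' b'
    using that assms by (simp add: filter_kernel_def prime_filter_meet_iff prime_filter_join_iff m_in j_in)
  then show ?thesis
    using equiv_filter_kernel unfolding lattice_congruence_def by blast
qed

definition saturated_prime_filters :: "('a \<times> 'a) set \<Rightarrow> 'a set set" where
  "saturated_prime_filters \<delta> = {P. prime_filter P \<and> saturated \<delta> P}"

lemma lattice_congruence_subset_filter_kernel:
  assumes "S \<subseteq> C" and "lattice_congruence S \<delta>"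
  shows "\<delta> \<subseteq> filter_kernel (saturated_prime_filters \<delta>)"
proof clarify
  fix a b
  assume ab: "(a, b) \<in> \<delta>"
  have "equiv S \<delta>"
    using assms(2) by (simp add: lattice_congruence_def)
  then have "(b, a) \<in> \<delta>" "a \<in> C" "b \<in> C"
    using ab assms(1) by (auto simp: equiv_def dest: symD)
  with ab show "(a, b) \<in> filter_kernel (saturated_prime_filters \<delta>)"
    unfolding filter_kernel_def saturated_prime_filters_def by (auto dest: saturatedD)
qed

lemma filter_kernel_restrict_subset:
  assumes S: "sublattice S" and \<delta>: "lattice_congruence S \<delta>"
  shows "filter_kernel (saturated_prime_filters \<delta>) \<inter> (S \<times> S) \<subseteq> \<delta>"
proof clarify
  let ?K = "filter_kernel (saturated_prime_filters \<delta>)"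
  fix a b
  assume ab: "(a, b) \<in> ?K" "a \<in> S" "b \<in> S"
  have below: "(m x y, x) \<in> \<delta>" if xy: "(x, y) \<in> ?K" "x \<in> S" "y \<in> S" for x y
  proof (rule ccontr)
    assume "(m x y, x) \<notin> \<delta>"
    then obtain P where "prime_filter P" "saturated \<delta> P" "x \<in> P" "y \<notin> P"
      using saturated_prime_filter_separation[OF S \<delta> xy(2,3)] by blast
    then show False
      using xy(1) by (auto simp: filter_kernel_def saturated_prime_filters_def)
  qed
  have \<delta>_sym: "sym \<delta>" and \<delta>_trans: "trans \<delta>"
    using \<delta> by (simp_all add: lattice_congruence_def equiv_def)
  have "(b, a) \<in> ?K"
    using ab(1) by (auto simp: filter_kernel_def)
  then have "(a, m a b) \<in> \<delta>" "(m b a, b) \<in> \<delta>"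
    using below ab \<delta>_sym by (auto dest: symD)
  moreover have "m a b = m b a"
    using ab(2,3) S m_comm by (auto simp: sublattice_def)
  ultimately show "(a, b) \<in> \<delta>"
    using \<delta>_trans by (auto dest: transD)
qed

end

text \<open>
  Only the first eight WHB axioms are assumed.
\<close>

locale bdl_imp_coimp = bdlat +
  fixes i c :: "'a \<Rightarrow> 'a \<Rightarrow> 'a"
  assumes i_in: "a \<in> C \<Longrightarrow> b \<in> C \<Longrightarrow> i a b \<in> C"
    and c_in: "a \<in> C \<Longrightarrow> b \<in> C \<Longrightarrow> c a b \<in> C"
    and imp_refl: "a \<in> C \<Longrightarrow> i a a = u"
    and imp_meet: "a \<in> C \<Longrightarrow> b \<in> C \<Longrightarrow> d \<in> C \<Longrightarrow> i a (m b d) = m (i a b) (i a d)"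
    and imp_join: "a \<in> C \<Longrightarrow> b \<in> C \<Longrightarrow> d \<in> C \<Longrightarrow> i (j a b) d = m (i a d) (i b d)"
    and imp_trans: "a \<in> C \<Longrightarrow> b \<in> C \<Longrightarrow> d \<in> C \<Longrightarrow> le (m (i a b) (i b d)) (i a d)"
    and coimp_refl: "a \<in> C \<Longrightarrow> c a a = z"
    and coimp_join: "a \<in> C \<Longrightarrow> b \<in> C \<Longrightarrow> d \<in> C \<Longrightarrow> c (j a b) d = j (c a d) (c b d)"
    and coimp_meet: "a \<in> C \<Longrightarrow> b \<in> C \<Longrightarrow> d \<in> C \<Longrightarrow> c a (m b d) = j (c a b) (c a d)"
    and coimp_trans: "a \<in> C \<Longrightarrow> b \<in> C \<Longrightarrow> d \<in> C \<Longrightarrow> le (c a d) (j (c a b) (c b d))"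
begin

definition subalgebra :: "'a set \<Rightarrow> bool" where
  "subalgebra S \<longleftrightarrow> sublattice S \<and> (\<forall>a\<in>S. \<forall>b\<in>S. i a b \<in> S \<and> c a b \<in> S)"

definition congruence :: "'a set \<Rightarrow> ('a \<times> 'a) set \<Rightarrow> bool" where
  "congruence S \<theta> \<longleftrightarrow> lattice_congruence S \<theta> \<and>
     (\<forall>a b a' b'. (a, a') \<in> \<theta> \<longrightarrow> (b, b') \<in> \<theta> \<longrightarrow> (i a b, i a' b') \<in> \<theta> \<and> (c a b, c a' b') \<in> \<theta>)"

definition imp_succ :: "'a set \<Rightarrow> 'a set \<Rightarrow> bool" where
  "imp_succ P Q \<longleftrightarrow> (\<forall>a\<in>Q. \<forall>b\<in>C. i a b \<in> P \<longrightarrow> b \<in> Q)"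

definition coimp_succ :: "'a set \<Rightarrow> 'a set \<Rightarrow> bool" where
  "coimp_succ P Q \<longleftrightarrow> (\<forall>a\<in>Q. \<forall>b\<in>C. c a b \<notin> P \<longrightarrow> b \<in> Q)"

lemma imp_eq_top:
  assumes "a \<in> C" "b \<in> C" "le a b"
  shows "i a b = u"
proof -
  have "i a b = m (i a a) (i a b)"
    using assms by (simp add: imp_refl top_meet i_in)
  also have "\<dots> = i a (m a b)"
    using assms by (simp add: imp_meet)
  also have "\<dots> = u"
    using assms by (simp add: le_def imp_refl)
  finally show ?thesis .
qed

lemma coimp_eq_bot:
  assumes "a \<in> C" "b \<in> C" "le a b"
  shows "c a b = z"
proof -
  have "c a b = j (c a b) (c b b)"
    using assms by (simp add: coimp_refl join_bot c_in)
  also have "\<dots> = c (j a b) b"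
    using assms by (simp add: coimp_join)
  also have "\<dots> = z"
    using assms by (simp add: le_iff_join coimp_refl)
  finally show ?thesis .
qed

lemma imp_preorder:
  assumes P: "prime_filter P"
  shows "lattice_preorder C m j z u (\<lambda>a b. i a b \<in> P)"
proof unfold_locales
  fix a b
  assume "a \<in> C" "b \<in> C" "le a b"
  then show "i a b \<in> P"
    using prime_filter_top[OF P] by (simp add: imp_eq_top)
next
  fix a b d
  assume "a \<in> C" "b \<in> C" "d \<in> C" "i a b \<in> P" "i b d \<in> P"
  then have "m (i a b) (i b d) \<in> P"
    using prime_filter_meet_iff[OF P] by (simp add: i_in)
  then show "i a d \<in> P"
    using prime_filter_up[OF P _ i_in imp_trans] \<open>a \<in> C\<close> \<open>b \<in> C\<close> \<open>d \<in> C\<close> by blast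
next
  fix a b d
  assume "a \<in> C" "b \<in> C" "d \<in> C" "i a b \<in> P" "i a d \<in> P"
  then show "i a (m b d) \<in> P"
    using P by (simp add: imp_meet prime_filter_meet_iff i_in)
next
  fix a b d
  assume "a \<in> C" "b \<in> C" "d \<in> C" "i a d \<in> P" "i b d \<in> P"
  then show "i (j a b) d \<in> P"
    using P by (simp add: imp_join prime_filter_meet_iff i_in)
qed

lemma coimp_preorder:
  assumes P: "prime_filter P"
  shows "lattice_preorder C m j z u (\<lambda>a b. c a b \<notin> P)"
proof unfold_locales
  fix a b
  assume "a \<in> C" "b \<in> C" "le a b"
  then show "c a b \<notin> P"
    using prime_filter_bot[OF P] by (simp add: coimp_eq_bot)
next
  fix a b d
  assume "a \<in> C" "b \<in> C" "d \<in> C" "c a b \<notin> P" "c b d \<notin> P"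
  then have "j (c a b) (c b d) \<notin> P"
    using prime_filter_join_iff[OF P] by (simp add: c_in)
  then show "c a d \<notin> P"
    using prime_filter_up[OF P _ j_in coimp_trans] \<open>a \<in> C\<close> \<open>b \<in> C\<close> \<open>d \<in> C\<close> c_in by blast
next
  fix a b d
  assume "a \<in> C" "b \<in> C" "d \<in> C" "c a b \<notin> P" "c a d \<notin> P"
  then show "c a (m b d) \<notin> P"
    using P by (simp add: coimp_meet prime_filter_join_iff c_in)
next
  fix a b d
  assume "a \<in> C" "b \<in> C" "d \<in> C" "c a d \<notin> P" "c b d \<notin> P"
  then show "c (j a b) d \<notin> P"
    using P by (simp add: coimp_join prime_filter_join_iff c_in)
qed

lemma imp_succ_witness:
  assumes P: "prime_filter P" and "x \<in> C" "y \<in> C" "i x y \<notin> P"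
  obtains Q where "prime_filter Q" "imp_succ P Q" "x \<in> Q" "y \<notin> Q"
proof -
  interpret R: lattice_preorder C m j z u "\<lambda>a b. i a b \<in> P"
    using P by (rule imp_preorder)
  obtain Q where Q: "prime_filter Q" "R.R_closed Q" "x \<in> Q" "y \<notin> Q"
    using R.prime_filter_separation[OF assms(2,3)] assms(4) by blast
  moreover have "imp_succ P Q"
    using Q(2) unfolding R.R_closed_def imp_succ_def .
  ultimately show thesis
    using that by blast
qed

lemma coimp_succ_witness:
  assumes P: "prime_filter P" and "x \<in> C" "y \<in> C" "c x y \<in> P"
  obtains Q where "prime_filter Q" "coimp_succ P Q" "x \<in> Q" "y \<notin> Q"
proof -
  interpret R: lattice_preorder C m j z u "\<lambda>a b. c a b \<notin> P"
    using P by (rule coimp_preorder)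
  obtain Q where Q: "prime_filter Q" "R.R_closed Q" "x \<in> Q" "y \<notin> Q"
    using R.prime_filter_separation[OF assms(2,3)] assms(4) by blast
  moreover have "coimp_succ P Q"
    using Q(2) unfolding R.R_closed_def coimp_succ_def .
  ultimately show thesis
    using that by blast
qed

lemma filter_kernel_imp:
  assumes prime: "\<And>P. P \<in> Y \<Longrightarrow> prime_filter P"
    and succ: "\<And>P Q. P \<in> Y \<Longrightarrow> prime_filter Q \<Longrightarrow> imp_succ P Q \<Longrightarrow> Q \<in> Y"
    and "(x, x') \<in> filter_kernel Y" "(y, y') \<in> filter_kernel Y"
  shows "(i x y, i x' y') \<in> filter_kernel Y"
proof -
  have preserve: "i x' y' \<notin> P"
    if xy: "(x, x') \<in> filter_kernel Y" "(y, y') \<in> filter_kernel Y" and P: "P \<in> Y" "i x y \<notin> P"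
    for x x' y y' P
  proof -
    have C: "x \<in> C" "y \<in> C" "y' \<in> C"
      using xy by (auto simp: filter_kernel_def)
    obtain Q where Q: "prime_filter Q" "imp_succ P Q" "x \<in> Q" "y \<notin> Q"
      using imp_succ_witness[OF prime[OF P(1)] C(1,2) P(2)] .
    have "Q \<in> Y"
      using succ[OF P(1) Q(1,2)] .
    then have "x' \<in> Q" "y' \<notin> Q"
      using xy Q(3,4) unfolding filter_kernel_def by blast+
    then show ?thesis
      using Q(2) C(3) unfolding imp_succ_def by blast
  qed
  have C: "x \<in> C" "x' \<in> C" "y \<in> C" "y' \<in> C"
    using assms(3,4) by (auto simp: filter_kernel_def)
  have "(x', x) \<in> filter_kernel Y" "(y', y) \<in> filter_kernel Y"
    using assms(3,4) by (auto simp: filter_kernel_def)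
  then have "i x y \<in> P \<longleftrightarrow> i x' y' \<in> P" if "P \<in> Y" for P
    using preserve[OF assms(3,4) that] preserve[of x' x y' y P] that by blast
  then show ?thesis
    unfolding filter_kernel_def using C by (simp add: i_in)
qed

lemma filter_kernel_coimp:
  assumes prime: "\<And>P. P \<in> Y \<Longrightarrow> prime_filter P"
    and succ: "\<And>P Q. P \<in> Y \<Longrightarrow> prime_filter Q \<Longrightarrow> coimp_succ P Q \<Longrightarrow> Q \<in> Y"
    and "(x, x') \<in> filter_kernel Y" "(y, y') \<in> filter_kernel Y"
  shows "(c x y, c x' y') \<in> filter_kernel Y"
proof -
  have preserve: "c x' y' \<in> P"
    if xy: "(x, x') \<in> filter_kernel Y" "(y, y') \<in> filter_kernel Y" and P: "P \<in> Y" "c x y \<in> P"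
    for x x' y y' P
  proof -
    have C: "x \<in> C" "y \<in> C" "y' \<in> C"
      using xy by (auto simp: filter_kernel_def)
    obtain Q where Q: "prime_filter Q" "coimp_succ P Q" "x \<in> Q" "y \<notin> Q"
      using coimp_succ_witness[OF prime[OF P(1)] C(1,2) P(2)] .
    have "Q \<in> Y"
      using succ[OF P(1) Q(1,2)] .
    then have "x' \<in> Q" "y' \<notin> Q"
      using xy Q(3,4) unfolding filter_kernel_def by blast+
    then show ?thesis
      using Q(2) C(3) unfolding coimp_succ_def by blast
  qed
  have C: "x \<in> C" "x' \<in> C" "y \<in> C" "y' \<in> C"
    using assms(3,4) by (auto simp: filter_kernel_def)
  have "(x', x) \<in> filter_kernel Y" "(y', y) \<in> filter_kernel Y"
    using assms(3,4) by (auto simp: filter_kernel_def)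
  then have "c x y \<in> P \<longleftrightarrow> c x' y' \<in> P" if "P \<in> Y" for P
    using preserve[OF assms(3,4) that] preserve[of x' x y' y P] that by blast
  then show ?thesis
    unfolding filter_kernel_def using C by (simp add: c_in)
qed

lemma congruence_filter_kernel:
  assumes "\<And>P. P \<in> Y \<Longrightarrow> prime_filter P"
    and "\<And>P Q. P \<in> Y \<Longrightarrow> prime_filter Q \<Longrightarrow> imp_succ P Q \<Longrightarrow> Q \<in> Y"
    and "\<And>P Q. P \<in> Y \<Longrightarrow> prime_filter Q \<Longrightarrow> coimp_succ P Q \<Longrightarrow> Q \<in> Y"
  shows "congruence C (filter_kernel Y)"
proof -
  have "(i a b, i a' b') \<in> filter_kernel Y \<and> (c a b, c a' b') \<in> filter_kernel Y"
    if "(a, a') \<in> filter_kernel Y" "(b, b') \<in> filter_kernel Y" for a b a' b'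
    by (intro conjI filter_kernel_imp[OF _ _ that] filter_kernel_coimp[OF _ _ that])
      (blast intro: assms)+
  then show ?thesis
    unfolding congruence_def using lattice_congruence_filter_kernel[OF assms(1)] by blast
qed

lemma saturated_imp_succ:
  assumes "S \<subseteq> C" "congruence S \<delta>" "prime_filter P" "saturated \<delta> P" "imp_succ P Q"
  shows "saturated \<delta> Q"
  unfolding saturated_def
proof clarify
  fix a b
  assume ab: "(a, b) \<in> \<delta>" and "a \<in> Q"
  have "equiv S \<delta>"
    using assms(2) by (simp add: congruence_def lattice_congruence_def)
  then have b: "b \<in> S" "(b, b) \<in> \<delta>"
    using ab unfolding equiv_def refl_on_def by blast+
  then have "(i b b, i a b) \<in> \<delta>"
    using assms(2) ab \<open>equiv S \<delta>\<close> unfolding congruence_def equiv_def sym_def by blast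
  moreover have "i b b \<in> P"
    using b(1) assms(1) prime_filter_top[OF assms(3)] by (simp add: imp_refl subset_iff)
  ultimately have "i a b \<in> P"
    by (rule saturatedD[OF assms(4)])
  then show "b \<in> Q"
    using assms(1,5) b \<open>a \<in> Q\<close> unfolding imp_succ_def by blast
qed

lemma saturated_coimp_succ:
  assumes "S \<subseteq> C" "congruence S \<delta>" "prime_filter P" "saturated \<delta> P" "coimp_succ P Q"
  shows "saturated \<delta> Q"
  unfolding saturated_def
proof clarify
  fix a b
  assume ab: "(a, b) \<in> \<delta>" and "a \<in> Q"
  have "equiv S \<delta>"
    using assms(2) by (simp add: congruence_def lattice_congruence_def)
  then have b: "b \<in> S" "(b, b) \<in> \<delta>"
    using ab unfolding equiv_def refl_on_def by blast+
  then have "(c a b, c b b) \<in> \<delta>"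
    using assms(2) ab unfolding congruence_def by blast
  moreover have "c b b \<notin> P"
    using b(1) assms(1) prime_filter_bot[OF assms(3)] by (simp add: coimp_refl subset_iff)
  ultimately have "c a b \<notin> P"
    using saturatedD[OF assms(4)] by blast
  then show "b \<in> Q"
    using assms(1,5) b \<open>a \<in> Q\<close> unfolding coimp_succ_def by blast
qed

theorem congruence_extension:
  assumes S: "subalgebra S" and \<delta>: "congruence S \<delta>"
  obtains \<theta> where "congruence C \<theta>" "\<delta> = \<theta> \<inter> (S \<times> S)"
proof -
  let ?\<theta> = "filter_kernel (saturated_prime_filters \<delta>)"
  have S_lat: "sublattice S" and SC: "S \<subseteq> C"
    using S by (simp_all add: subalgebra_def sublattice_def)
  have \<delta>_lat: "lattice_congruence S \<delta>"
    using \<delta> by (simp add: congruence_def)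
  then have "\<delta> \<subseteq> S \<times> S"
    by (simp add: lattice_congruence_def equiv_type)
  then have "\<delta> = ?\<theta> \<inter> (S \<times> S)"
    using lattice_congruence_subset_filter_kernel[OF SC \<delta>_lat]
      filter_kernel_restrict_subset[OF S_lat \<delta>_lat] by blast
  moreover have "congruence C ?\<theta>"
  proof (rule congruence_filter_kernel)
    show "prime_filter P" if "P \<in> saturated_prime_filters \<delta>" for P
      using that by (simp add: saturated_prime_filters_def)
    show "Q \<in> saturated_prime_filters \<delta>"
      if "P \<in> saturated_prime_filters \<delta>" "prime_filter Q" "imp_succ P Q" for P Q
      using that saturated_imp_succ[OF SC \<delta>] unfolding saturated_prime_filters_def by blast
    show "Q \<in> saturated_prime_filters \<delta>"
      if "P \<in> saturated_prime_filters \<delta>" "prime_filter Q" "coimp_succ P Q" for P Q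
      using that saturated_coimp_succ[OF SC \<delta>] unfolding saturated_prime_filters_def by blast
  qed
  ultimately show thesis
    using that by blast
qed

end

lemma WHB_algebra_bdl_imp_coimp:
  assumes "WHB_algebra B"
  shows "bdl_imp_coimp (carrier B) (mt B) (jn B) (bot B) (top B) (imp B) (coimp B)"
proof -
  interpret bdlat "carrier B" "mt B" "jn B" "bot B" "top B"
    using assms unfolding WHB_algebra_def Let_def by unfold_locales blast+
  show ?thesis
    apply unfold_locales
    using assms unfolding WHB_algebra_def Let_def whb_le_def le_def by blast+
qed

theorem corollary6p28:
  fixes B :: "('a, 'b) whb_alg_scheme" and A :: "'a set" and \<delta> :: "('a \<times> 'a) set"
  assumes "WHB_algebra B"
    and "subuniverse A B"
    and "congruence_on A B \<delta>"
  shows "\<exists>\<theta>. congruence_on (carrier B) B \<theta> \<and> \<delta> = \<theta> \<inter> (A \<times> A)"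
proof -
  interpret bdl_imp_coimp "carrier B" "mt B" "jn B" "bot B" "top B" "imp B" "coimp B"
    using assms(1) by (rule WHB_algebra_bdl_imp_coimp)
  have congruence_on_iff: "congruence_on S B \<theta> \<longleftrightarrow> congruence S \<theta>" for S \<theta>
    unfolding congruence_on_def congruence_def lattice_congruence_def by blast
  have "subalgebra A"
    using assms(2) unfolding subuniverse_def subalgebra_def sublattice_def by blast
  moreover have "congruence A \<delta>"
    using assms(3) congruence_on_iff by blast
  ultimately obtain \<theta> where "congruence (carrier B) \<theta>" "\<delta> = \<theta> \<inter> (A \<times> A)"
    by (rule congruence_extension)
  then show ?thesis
    using congruence_on_iff by blast
qed

end
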